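(* Let $(P_n)_{n\ge0}$ be defined by $P_0(m)=m$ and $P_{n+1}(m)=P_n(m+1)+\sum_{i=0}^{n}P_i(m)P_{n-i}(m)$, write $P_n(m)=\sum_{i=1}^{n+2}p^{(i)}_n m^{n+2-i}$ (with $p^{(i)}_n=0$ for $i>n+2$), and let $a_i(z)=\sum_{n\ge0}p^{(i)}_n z^n$. Then for every $i\ge 2$, \[a_i(z)\ \sim\ \frac{C_{i-2}}{2^{3i-5}(1-4z)^{(2i-3)/2}}\qquad\text{as } z\to \tfrac14,\] where $C_k=\frac{1}{k+1}\binom{2k}{k}$ is the $k$-th Catalan number.
   Context: $f(z)\sim g(z)$ as $z\to z_0$ means $f(z)/g(z)\to 1$ as $z\to z_0$; here $z\to 1/4$ within the disc $|z|<1/4$ where the $a_i$ converge. *)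

theory Defs
  imports "HOL-Analysis.Analysis" "HOL-Computational_Algebra.Polynomial"
begin

fun Ppoly :: "nat \<Rightarrow> int poly" where
  "Ppoly 0 = [:0, 1:]"
| "Ppoly (Suc n) = pcompose (Ppoly n) [:1, 1:]
     + (\<Sum>i\<le>n. Ppoly i * Ppoly (n - i))"

definition pcoef :: "nat \<Rightarrow> nat \<Rightarrow> int" where
  "pcoef i n = (if 1 \<le> i \<and> i \<le> n + 2 then coeff (Ppoly n) (n + 2 - i) else 0)"

definition agen :: "nat \<Rightarrow> complex \<Rightarrow> complex" where
  "agen i z = (\<Sum>n. of_int (pcoef i n) * z ^ n)"

definition catalan :: "nat \<Rightarrow> real" where
  "catalan k = real ((2 * k) choose k) / real (k + 1)"

end

theory Submission
  imports Defs "HOL-Complex_Analysis.Complex_Analysis"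
begin

text \<open>Comparing coefficients of m^(n+2-i) in the recurrence turns it into identities between
  the series a_i. For i = 1 it reads a_1 = 1 + z a_1^2, so a_1 is the Catalan series and
  1 - 2 z a_1 = sqrt(1 - 4z). For i \<ge> 2, expanding P_n(m+1) by Taylor's formula gives

    sqrt(1 - 4z) a_i = z^(i-2) \<Sum>_{k<i} D^(i-1-k) (z^(2-k) a_k) / (i-1-k)! + z \<Sum>_{a=2}^{i-1} a_a a_(i+1-a).

  Near z = 1/4 every function in sight has the form q / sqrt(1 - 4z)^k with q in the algebra
  generated by sqrt(1 - 4z) and the functions holomorphic at 1/4, and differentiation raises k by
  two. By induction on i, a_i has order 2i - 3: the derivative terms only have order 2i - 5, so
  the products alone determine the leading coefficients, c_i = (1/4) \<Sum>_{a=2}^{i-1} c_a c_(i+1-a),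
  and the Catalan convolution solves this by c_i = C_(i-2) / 2^(3i-5).\<close>

section \<open>The recurrence for the coefficients\<close>

lemma degree_Ppoly_le: "degree (Ppoly n) \<le> n + 1"
proof (induction n rule: less_induct)
  case (less n)
  show ?case
  proof (cases n)
    case (Suc m)
    have "degree (pcompose (Ppoly m) [:1, 1:]) \<le> m + 1"
      using degree_pcompose_le[of "Ppoly m" "[:1,1:]"] less[of m] Suc by simp
    moreover have "degree (\<Sum>i\<le>m. Ppoly i * Ppoly (m - i)) \<le> m + 2"
    proof (rule degree_sum_le)
      fix i assume "i \<in> {..m}"
      then have "degree (Ppoly i) \<le> i + 1" "degree (Ppoly (m - i)) \<le> m - i + 1"
        using less Suc by auto
      then show "degree (Ppoly i * Ppoly (m - i)) \<le> m + 2"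
        using degree_mult_le[of "Ppoly i" "Ppoly (m-i)"] \<open>i \<in> {..m}\<close> by auto
    qed simp
    ultimately show ?thesis
      using Suc degree_add_le[of "pcompose (Ppoly m) [:1, 1:]" "m+2"] by auto
  qed simp
qed

lemma coeff_Ppoly_nonzero_imp: "coeff (Ppoly n) d \<noteq> 0 \<Longrightarrow> d \<le> n + 1"
  using degree_Ppoly_le[of n] le_degree order_trans by blast

lemma pcompose_x_power: "pcompose ([:0, 1:] ^ n) q = q ^ n"
  by (induction n) (simp_all only: power_0 power_Suc pcompose_1 pcompose_mult, simp_all add: pcompose_pCons)

lemma coeff_pcompose_plus_one:
  fixes p :: "'a::comm_semiring_1 poly"
  assumes "degree p \<le> N"
  shows "coeff (pcompose p [:1, 1:]) d = (\<Sum>t\<le>N. coeff p t * of_nat (t choose d))"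
proof -
  have "pcompose p [:1,1:] = (\<Sum>t\<le>N. pcompose (monom (coeff p t) t) [:1,1:])"
    using poly_as_sum_of_monoms'[OF assms] pcompose_sum by metis
  also have "\<dots> = (\<Sum>t\<le>N. smult (coeff p t) ([:1,1:] ^ t))"
    by (simp add: monom_altdef pcompose_smult pcompose_x_power)
  finally have "coeff (pcompose p [:1,1:]) d = (\<Sum>t\<le>N. coeff p t * coeff ([:1,1:] ^ t) d)"
    by (simp add: coeff_sum)
  also have "\<dots> = (\<Sum>t\<le>N. coeff p t * of_nat (t choose d))"
  proof (intro sum.cong refl)
    fix t
    show "coeff p t * coeff ([:1,1:] ^ t) d = coeff p t * of_nat (t choose d)"
    proof (cases "d \<le> t")
      case False
      have "degree ([:1::'a,1:] ^ t) \<le> t"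
        using degree_power_le[of "[:1::'a,1:]" t] by simp
      then have "coeff ([:1::'a,1:] ^ t) d = 0" using False by (intro coeff_eq_0) auto
      then show ?thesis using False by (simp add: binomial_eq_0)
    qed (simp add: coeff_linear_poly_power)
  qed
  finally show ?thesis .
qed

lemma pcoef_0: "pcoef i 0 = (if i = 1 then 1 else 0)"
  by (auto simp: pcoef_def)

lemma pcoef_nonzero_imp: "pcoef a j \<noteq> 0 \<Longrightarrow> 1 \<le> a \<and> a \<le> j + 2"
  by (auto simp: pcoef_def split: if_splits)

lemma pcoef_eq_coeff: "1 \<le> a \<Longrightarrow> a \<le> j + 2 \<Longrightarrow> pcoef a j = coeff (Ppoly j) (j + 2 - a)"
  by (simp add: pcoef_def)

lemma coeff_Ppoly_shift:
  assumes "1 \<le> i" "i \<le> n + 3"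
  shows "coeff (pcompose (Ppoly n) [:1, 1:]) (n + 3 - i)
       = (\<Sum>k\<in>{1..<i}. int ((n + 2 - k) choose (i - 1 - k)) * pcoef k n)"
proof -
  have "coeff (pcompose (Ppoly n) [:1, 1:]) (n + 3 - i)
      = (\<Sum>t\<le>n+1. coeff (Ppoly n) t * int (t choose (n + 3 - i)))"
    by (rule coeff_pcompose_plus_one[OF degree_Ppoly_le])
  also have "\<dots> = (\<Sum>t\<in>{n+3-i..n+1}. coeff (Ppoly n) t * int (t choose (n + 3 - i)))"
    by (rule sum.mono_neutral_right) auto
  also have "\<dots> = (\<Sum>k\<in>{1..<i}. int ((n + 2 - k) choose (i - 1 - k)) * pcoef k n)"
  proof (rule sum.reindex_bij_witness[where i = "\<lambda>k. n + 2 - k" and j = "\<lambda>t. n + 2 - t"])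
    fix t assume t: "t \<in> {n+3-i..n+1}"
    have "pcoef (n + 2 - t) n = coeff (Ppoly n) t" using t assms by (subst pcoef_eq_coeff) auto
    moreover have "t choose (i - 1 - (n + 2 - t)) = t choose (n + 3 - i)"
      using t assms by (subst binomial_symmetric) (auto intro: arg_cong2[where f = "(choose)"])
    ultimately show "int ((n + 2 - (n + 2 - t)) choose (i - 1 - (n + 2 - t))) * pcoef (n + 2 - t) n =
       coeff (Ppoly n) t * int (t choose (n + 3 - i))" using t by simp
  qed (use assms in auto)
  finally show ?thesis .
qed

lemma coeff_Ppoly_mult:
  assumes "1 \<le> i" "i \<le> n + 3" "j \<le> n"
  shows "coeff (Ppoly j * Ppoly (n - j)) (n + 3 - i)
       = (\<Sum>a\<in>{1..i}. pcoef a j * pcoef (i + 1 - a) (n - j))"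
proof -
  define d where "d = n + 3 - i"
  define U where "U = {u. u \<le> d \<and> u \<le> j + 1 \<and> d - u \<le> n - j + 1}"
  define A where "A = {a\<in>{1..i}. a \<le> j + 2 \<and> i + 1 - a \<le> n - j + 2}"
  have "coeff (Ppoly j * Ppoly (n - j)) d
      = (\<Sum>u\<le>d. coeff (Ppoly j) u * coeff (Ppoly (n - j)) (d - u))"
    by (simp add: coeff_mult)
  also have "\<dots> = (\<Sum>u\<in>U. coeff (Ppoly j) u * coeff (Ppoly (n - j)) (d - u))"
    by (rule sum.mono_neutral_right) (auto simp: U_def dest!: coeff_Ppoly_nonzero_imp)
  also have "\<dots> = (\<Sum>a\<in>A. pcoef a j * pcoef (i + 1 - a) (n - j))"
  proof (rule sum.reindex_bij_witness[where i = "\<lambda>a. j + 2 - a" and j = "\<lambda>u. j + 2 - u"])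
    fix u assume u: "u \<in> U"
    have "pcoef (j + 2 - u) j = coeff (Ppoly j) u"
      using u assms by (subst pcoef_eq_coeff) (auto simp: U_def)
    moreover have "pcoef (i + 1 - (j + 2 - u)) (n - j) = coeff (Ppoly (n - j)) (d - u)"
      using u assms
      by (subst pcoef_eq_coeff) (auto simp: U_def d_def intro!: arg_cong[where f = "coeff _"])
    ultimately show "pcoef (j + 2 - u) j * pcoef (i + 1 - (j + 2 - u)) (n - j) =
         coeff (Ppoly j) u * coeff (Ppoly (n - j)) (d - u)" by simp
  qed (use assms in \<open>auto simp: A_def U_def d_def\<close>)
  also have "\<dots> = (\<Sum>a\<in>{1..i}. pcoef a j * pcoef (i + 1 - a) (n - j))"
    by (rule sum.mono_neutral_left) (auto simp: A_def dest: pcoef_nonzero_imp)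
  finally show ?thesis by (simp add: d_def)
qed

lemma shift_sum_eq_0:
  assumes "n + 3 < i"
  shows "(\<Sum>k\<in>{1..<i}. int ((n + 2 - k) choose (i - 1 - k)) * pcoef k n) = 0"
proof (intro sum.neutral ballI)
  fix k assume "k \<in> {1..<i}"
  show "int ((n + 2 - k) choose (i - 1 - k)) * pcoef k n = 0"
  proof (cases "pcoef k n = 0")
    case False
    then have "k \<le> n + 2" using pcoef_nonzero_imp by blast
    then have "(n + 2 - k) choose (i - 1 - k) = 0" using assms by (intro binomial_eq_0) auto
    then show ?thesis by simp
  qed simp
qed

lemma pcoef_Suc:
  assumes "1 \<le> i"
  shows "pcoef i (Suc n) = (\<Sum>k\<in>{1..<i}. int ((n + 2 - k) choose (i - 1 - k)) * pcoef k n)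
           + (\<Sum>a\<in>{1..i}. \<Sum>j\<le>n. pcoef a j * pcoef (i + 1 - a) (n - j))"
proof (cases "i \<le> n + 3")
  case True
  have "pcoef i (Suc n) = coeff (Ppoly (Suc n)) (n + 3 - i)"
    using True assms by (simp add: pcoef_def eval_nat_numeral del: Ppoly.simps)
  also have "\<dots> = coeff (pcompose (Ppoly n) [:1, 1:]) (n + 3 - i)
       + (\<Sum>j\<le>n. coeff (Ppoly j * Ppoly (n - j)) (n + 3 - i))"
    by (subst Ppoly.simps) (simp only: coeff_add coeff_sum)
  also have "(\<Sum>j\<le>n. coeff (Ppoly j * Ppoly (n - j)) (n + 3 - i))
      = (\<Sum>a\<in>{1..i}. \<Sum>j\<le>n. pcoef a j * pcoef (i + 1 - a) (n - j))"
    using coeff_Ppoly_mult[OF assms True] by (subst sum.swap) (intro sum.cong, auto)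
  finally show ?thesis using coeff_Ppoly_shift[OF assms True] by simp
next
  case False
  have "(\<Sum>a\<in>{1..i}. \<Sum>j\<le>n. pcoef a j * pcoef (i + 1 - a) (n - j)) = 0"
  proof (intro sum.neutral ballI)
    fix a j assume a: "a \<in> {1..i}" and j: "j \<in> {..n}"
    show "pcoef a j * pcoef (i + 1 - a) (n - j) = 0"
    proof (rule ccontr)
      assume "pcoef a j * pcoef (i + 1 - a) (n - j) \<noteq> 0"
      then have "a \<le> j + 2" "i + 1 - a \<le> n - j + 2"
        using pcoef_nonzero_imp by (auto simp del: mult_eq_0_iff simp: mult_eq_0_iff)
      then show False using False a j by auto
    qed
  qed
  moreover have "pcoef i (Suc n) = 0" using False by (simp add: pcoef_def)
  ultimately show ?thesis using False shift_sum_eq_0[of n i] by simp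
qed

section \<open>Generating series\<close>

definition afps :: "nat \<Rightarrow> complex fps" where
  "afps k = Abs_fps (\<lambda>n. of_int (pcoef k n))"

text \<open>\<open>afps_scaled k\<close> is z^(2-k) a_k(z), a genuine power series since p^(k)_n = 0 for n < k - 2.
  The term P_n(m+1) of the recurrence contributes z^(i-2) \<open>taylor_part i\<close> to a_i.\<close>
definition afps_scaled :: "nat \<Rightarrow> complex fps" where
  "afps_scaled k = Abs_fps (\<lambda>m. if 2 \<le> m + k then of_int (pcoef k (m + k - 2)) else 0)"

definition taylor_part :: "nat \<Rightarrow> complex fps" where
  "taylor_part i = (\<Sum>k\<in>{1..<i}.
     fps_const (1 / fact (i - 1 - k)) * (fps_deriv ^^ (i - 1 - k)) (afps_scaled k))"

lemma afps_nth [simp]: "afps k $ n = of_int (pcoef k n)"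
  by (simp add: afps_def)

lemma afps_scaled_nth:
  "afps_scaled k $ m = (if 2 \<le> m + k then of_int (pcoef k (m + k - 2)) else 0)"
  by (simp add: afps_scaled_def)

lemma agen_eq_eval_fps: "agen k z = eval_fps (afps k) z"
  by (simp add: agen_def eval_fps_def)

lemma afps_0: "afps 0 = 0"
  by (rule fps_ext) (simp add: pcoef_def)

lemma afps_1_eq: "afps 1 = 1 + fps_X * afps 1 ^ 2"
proof (rule fps_ext)
  fix n show "afps 1 $ n = (1 + fps_X * afps 1 ^ 2) $ n"
  proof (cases n)
    case (Suc m)
    have "pcoef 1 (Suc m) = (\<Sum>j\<le>m. pcoef 1 j * pcoef 1 (m - j))"
      using pcoef_Suc[of 1 m] by simp
    moreover have "(fps_X * afps 1 ^ 2) $ Suc m = (afps 1 * afps 1) $ m"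
      by (simp only: fps_X_mult_nth power2_eq_square) simp
    ultimately show ?thesis using Suc by (simp add: fps_mult_nth atLeast0AtMost)
  qed (simp add: pcoef_0)
qed

lemma afps_eq_X_power_mult: "k \<ge> 2 \<Longrightarrow> afps k = fps_X ^ (k - 2) * afps_scaled k"
  by (rule fps_ext) (auto simp: fps_X_power_mult_nth afps_scaled_nth pcoef_def)

lemma afps_scaled_eq_shift: "k \<ge> 2 \<Longrightarrow> afps_scaled k = fps_shift (k - 2) (afps k)"
  by (rule fps_ext) (simp add: afps_scaled_nth)

lemma afps_scaled_1: "afps_scaled 1 = fps_X * afps 1"
  by (rule fps_ext) (auto simp: fps_X_mult_nth afps_scaled_nth)

lemma fps_deriv_funpow_nth:
  fixes f :: "'a::comm_semiring_1 fps"
  shows "(fps_deriv ^^ r) f $ m = pochhammer (of_nat m + 1) r * f $ (m + r)"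
proof (induction r arbitrary: m)
  case (Suc r)
  have "(fps_deriv ^^ Suc r) f $ m = of_nat (m + 1) * ((fps_deriv ^^ r) f $ (m + 1))"
    by (simp add: fps_deriv_nth)
  also have "\<dots> = pochhammer (of_nat m + 1) (Suc r) * f $ (m + Suc r)"
    using Suc by (simp add: pochhammer_rec add_ac mult.assoc)
  finally show ?case .
qed simp

lemma fps_deriv_funpow_nth_div_fact:
  fixes f :: "'a::field_char_0 fps"
  shows "(fps_deriv ^^ r) f $ m / fact r = of_nat ((m + r) choose r) * f $ (m + r)"
proof -
  have "pochhammer (of_nat m + 1 :: 'a) r / fact r = of_nat ((m + r) choose r)"
    using gbinomial_pochhammer'[of "of_nat (m + r) :: 'a" r] by (simp add: binomial_gbinomial)
  moreover have "(fps_deriv ^^ r) f $ m / fact r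
      = (pochhammer (of_nat m + 1 :: 'a) r / fact r) * f $ (m + r)"
    by (simp add: fps_deriv_funpow_nth times_divide_eq_left)
  ultimately show ?thesis by simp
qed

lemma taylor_part_nth:
  assumes "i \<le> n + 3"
  shows "taylor_part i $ (n + 3 - i)
       = of_int (\<Sum>k\<in>{1..<i}. int ((n + 2 - k) choose (i - 1 - k)) * pcoef k n)"
  unfolding taylor_part_def fps_sum_nth of_int_sum
proof (intro sum.cong refl)
  fix k assume k: "k \<in> {1..<i}"
  have "n + 3 - i + (i - 1 - k) = n + 2 - k" using k assms by auto
  then have "(fps_deriv ^^ (i - 1 - k)) (afps_scaled k) $ (n + 3 - i) / fact (i - 1 - k)
      = of_nat ((n + 2 - k) choose (i - 1 - k)) * afps_scaled k $ (n + 2 - k)"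
    by (metis fps_deriv_funpow_nth_div_fact)
  moreover have "afps_scaled k $ (n + 2 - k) = of_int (pcoef k n)"
    using k assms by (simp add: afps_scaled_nth)
  ultimately show "(fps_const (1 / fact (i - 1 - k)) * (fps_deriv ^^ (i - 1 - k)) (afps_scaled k))
      $ (n + 3 - i) = of_int (int ((n + 2 - k) choose (i - 1 - k)) * pcoef k n)"
    by simp
qed

lemma afps_recurrence:
  assumes "i \<ge> 2"
  shows "afps i = fps_X ^ (i - 2) * taylor_part i + fps_X * (\<Sum>a\<in>{1..i}. afps a * afps (i + 1 - a))"
proof (rule fps_ext)
  fix n
  show "afps i $ n = (fps_X ^ (i - 2) * taylor_part i
                     + fps_X * (\<Sum>a\<in>{1..i}. afps a * afps (i + 1 - a))) $ n"
  proof (cases n)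
    case 0
    have "(fps_X ^ (i - 2) * taylor_part i) $ 0 = 0"
    proof (cases "i = 2")
      case True
      then show ?thesis by (simp add: taylor_part_def afps_scaled_nth fps_sum_nth)
    qed (use assms in \<open>simp add: fps_X_power_mult_nth\<close>)
    then show ?thesis using 0 assms by (simp add: pcoef_0 fps_X_mult_nth)
  next
    case (Suc m)
    have "(fps_X ^ (i - 2) * taylor_part i) $ Suc m
        = of_int (\<Sum>k\<in>{1..<i}. int ((m + 2 - k) choose (i - 1 - k)) * pcoef k m)"
    proof (cases "i \<le> m + 3")
      case True
      then have "Suc m - (i - 2) = m + 3 - i" using assms by auto
      then show ?thesis using True assms by (simp add: fps_X_power_mult_nth taylor_part_nth)
    qed (use shift_sum_eq_0[of m i] in \<open>simp add: fps_X_power_mult_nth\<close>)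
    moreover have "(fps_X * (\<Sum>a\<in>{1..i}. afps a * afps (i + 1 - a))) $ Suc m
        = of_int (\<Sum>a\<in>{1..i}. \<Sum>j\<le>m. pcoef a j * pcoef (i + 1 - a) (m - j))"
      by (simp only: fps_X_mult_nth) (simp add: fps_sum_nth fps_mult_nth atLeast0AtMost)
    ultimately show ?thesis using Suc pcoef_Suc[of i m] assms by simp
  qed
qed

section \<open>The square root of \<open>1 - 4z\<close> and the Catalan numbers\<close>

definition rt :: "complex \<Rightarrow> complex" where
  "rt z = csqrt (1 - 4 * z)"

lemma one_minus_4z_notin_nonpos_Reals:
  assumes "norm (z::complex) < 1/4"
  shows "1 - 4 * z \<notin> \<real>\<^sub>\<le>\<^sub>0"
proof -
  have "Re z < 1/4" using assms complex_Re_le_cmod[of z] by linarith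
  then show ?thesis by (auto simp: complex_nonpos_Reals_iff)
qed

lemma rt_nonzero: "norm z < 1/4 \<Longrightarrow> rt z \<noteq> 0"
  using one_minus_4z_notin_nonpos_Reals[of z] by (auto simp: rt_def)

lemma rt_holomorphic: "rt holomorphic_on ball 0 (1/4)"
  unfolding rt_def by (intro holomorphic_intros) (metis mem_ball_0 one_minus_4z_notin_nonpos_Reals)

definition rt_fps :: "complex fps" where
  "rt_fps = fps_expansion rt 0"

lemma rt_fps_conv_radius: "ereal (1/4) \<le> fps_conv_radius rt_fps"
  using conv_radius_fps_expansion[of rt 0 "ereal (1/4)"] rt_holomorphic by (simp add: rt_fps_def)

lemma eval_rt_fps: "norm z < 1/4 \<Longrightarrow> eval_fps rt_fps z = rt z"
  using eval_fps_expansion'[of rt 0 "ereal (1/4)"] rt_holomorphic by (simp add: rt_fps_def)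

lemma norm_less_conv_radius:
  "ereal (1/4) \<le> fps_conv_radius f \<Longrightarrow> norm (z::complex) < 1/4 \<Longrightarrow> norm z < fps_conv_radius f"
  using less_le_trans[of "ereal (norm z)" "ereal (1/4)" "fps_conv_radius f"] by simp

lemma rt_fps_square: "rt_fps * rt_fps = 1 - 4 * fps_X"
proof (rule eval_fps_eqD)
  have "fps_conv_radius (rt_fps * rt_fps) \<ge> ereal (1/4)"
    using fps_conv_radius_mult[of rt_fps rt_fps] rt_fps_conv_radius by simp
  then show "fps_conv_radius (rt_fps * rt_fps) > 0"
    using less_le_trans[of 0 "ereal (1/4)"] by simp
  have "fps_conv_radius (4 * fps_X :: complex fps) = \<infinity>"
    by (simp add: numeral_fps_const fps_conv_radius_cmult_left)
  then show "fps_conv_radius (1 - 4 * fps_X :: complex fps) > 0"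
    using fps_conv_radius_diff[of 1 "4 * fps_X :: complex fps"] by simp
  have "eventually (\<lambda>z::complex. z \<in> ball 0 (1/4)) (nhds 0)"
    by (intro eventually_nhds_in_open) auto
  then show "eventually (\<lambda>z. eval_fps (rt_fps * rt_fps) z = eval_fps (1 - 4 * fps_X) z) (nhds 0)"
  proof eventually_elim
    case (elim z)
    then have z: "norm z < 1/4" by simp
    have "eval_fps (rt_fps * rt_fps) z = rt z * rt z"
      by (subst eval_fps_mult)
        (simp_all add: norm_less_conv_radius[OF rt_fps_conv_radius z] eval_rt_fps[OF z])
    also have "\<dots> = eval_fps (1 - 4 * fps_X) z"
      unfolding rt_def power2_eq_square[symmetric]
      by (subst eval_fps_diff) (simp_all add: numeral_fps_const fps_conv_radius_cmult_left eval_fps_mult)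
    finally show ?case .
  qed
qed

lemma rt_fps_nth_0: "rt_fps $ 0 = 1"
  using eval_rt_fps[of 0] by (simp add: eval_fps_at_0 rt_def)

lemma fps_square_eq_imp_eq:
  fixes f g :: "'a::{idom, ring_char_0} fps"
  assumes "f * f = g * g" "f $ 0 = g $ 0" "f $ 0 \<noteq> 0"
  shows "f = g"
proof -
  have "(f - g) * (f + g) = 0" using assms(1) by (simp add: algebra_simps)
  moreover have "(f + g) $ 0 \<noteq> 0" using assms(2,3) by (simp flip: mult_2)
  then have "f + g \<noteq> 0" by (metis fps_zero_nth)
  ultimately show ?thesis by simp
qed

lemma one_minus_2X_afps_1: "1 - 2 * fps_X * afps 1 = rt_fps"
proof (rule fps_square_eq_imp_eq)
  have "(1 - 2 * fps_X * afps 1) * (1 - 2 * fps_X * afps 1)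
      = 1 - 4 * fps_X * (afps 1 - fps_X * afps 1 ^ 2)"
    unfolding power2_eq_square by algebra
  also have "afps 1 - fps_X * afps 1 ^ 2 = 1"
    using afps_1_eq by (metis add_diff_cancel_right')
  finally show "(1 - 2 * fps_X * afps 1) * (1 - 2 * fps_X * afps 1) = rt_fps * rt_fps"
    using rt_fps_square by simp
qed (simp_all add: rt_fps_nth_0)

lemma X_mult_afps_1: "fps_X * afps 1 = fps_const (1/2) * (1 - rt_fps)"
proof -
  have "fps_const (1/2) * (1 - rt_fps) = fps_const (1/2) * (2 * (fps_X * afps 1))"
    by (simp flip: one_minus_2X_afps_1 add: mult.assoc)
  also have "\<dots> = fps_X * afps 1"
    by (simp add: numeral_fps_const mult.assoc[symmetric] fps_const_mult)
  finally show ?thesis ..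
qed

lemma rt_fps_deriv_eq: "(1 - 4 * fps_X) * fps_deriv rt_fps = - 2 * rt_fps"
proof -
  have "fps_deriv (rt_fps * rt_fps) = fps_deriv (1 - 4 * fps_X :: complex fps)"
    using rt_fps_square by simp
  then have "2 * rt_fps * fps_deriv rt_fps = - 4"
    by (simp add: fps_deriv_mult algebra_simps numeral_fps_const)
  then have "rt_fps * (2 * rt_fps * fps_deriv rt_fps) = rt_fps * (- 4)" by simp
  then have "2 * ((rt_fps * rt_fps) * fps_deriv rt_fps) = - 4 * rt_fps" by (simp add: algebra_simps)
  then have "2 * ((1 - 4 * fps_X) * fps_deriv rt_fps) = 2 * (- 2 * rt_fps)"
    unfolding rt_fps_square by (simp add: algebra_simps)
  moreover have "(2::complex fps) \<noteq> 0" by (simp add: numeral_fps_const)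
  ultimately show ?thesis using mult_left_cancel by blast
qed

lemma rt_fps_nth_Suc: "of_nat (n + 1) * rt_fps $ (n + 1) = (4 * of_nat n - 2) * rt_fps $ n"
proof -
  have "(fps_X * fps_deriv rt_fps) $ n = of_nat n * rt_fps $ n"
    by (cases n) (simp_all add: fps_X_mult_nth fps_deriv_nth)
  moreover have "(1 - 4 * fps_X) * fps_deriv rt_fps
      = fps_deriv rt_fps - fps_const 4 * (fps_X * fps_deriv rt_fps)"
    by (simp add: algebra_simps numeral_fps_const)
  ultimately have "((1 - 4 * fps_X) * fps_deriv rt_fps) $ n
      = of_nat (n + 1) * rt_fps $ (n + 1) - 4 * (of_nat n * rt_fps $ n)"
    by (simp add: fps_deriv_nth)
  moreover have "((1 - 4 * fps_X) * fps_deriv rt_fps) $ n = (- 2 * rt_fps) $ n"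
    using rt_fps_deriv_eq by simp
  moreover have "(- 2 * rt_fps) $ n = - 2 * rt_fps $ n" by (simp add: numeral_fps_const)
  ultimately show ?thesis by (simp add: algebra_simps)
qed

lemma pcoef_1_Suc:
  "real (n + 2) * of_int (pcoef 1 (n + 1)) = (4 * real n + 2) * of_int (pcoef 1 n)"
proof -
  have rt_nth: "rt_fps $ Suc m = - 2 * of_int (pcoef 1 m)" for m
  proof -
    have "(fps_X * afps 1) $ Suc m = (fps_const (1/2) * (1 - rt_fps)) $ Suc m"
      by (simp only: X_mult_afps_1)
    then show ?thesis by (simp add: fps_X_mult_nth field_simps)
  qed
  define p :: complex where "p = of_int (pcoef 1 n)"
  define q :: complex where "q = of_int (pcoef 1 (n + 1))"
  have "of_nat (Suc n + 1) * rt_fps $ (Suc n + 1) = (4 * of_nat (Suc n) - 2) * rt_fps $ Suc n"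
    by (rule rt_fps_nth_Suc)
  then have "of_nat (n + 2) * (- 2 * q) = (4 * of_nat (n + 1) - 2) * (- 2 * p)"
    unfolding p_def q_def using rt_nth[of n] rt_nth[of "Suc n"] by simp
  then have "2 * (of_nat (n + 2) * q) = 2 * ((4 * of_nat n + 2) * p)"
    by (simp add: algebra_simps)
  then have "of_nat (n + 2) * q = (4 * of_nat n + 2) * p"
    by simp
  then have "complex_of_real (real (n + 2) * of_int (pcoef 1 (n + 1)))
           = complex_of_real ((4 * real n + 2) * of_int (pcoef 1 n))"
    by (simp add: p_def q_def)
  then show ?thesis by (simp only: of_real_eq_iff)
qed

lemma catalan_Suc: "real (n + 2) * catalan (n + 1) = (4 * real n + 2) * catalan n"
proof -
  define X where "X = real ((2 * n + 2) choose (n + 1))"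
  define A where "A = real ((2 * n + 1) choose n)"
  define B where "B = real ((2 * n) choose n)"
  have "real (Suc n) * X = real (2 * n + 2) * A"
    using arg_cong[OF Suc_times_binomial[of n "2 * n + 1"], of real]
    unfolding X_def A_def of_nat_mult by simp
  then have "real (Suc n) * X = real (Suc n) * (2 * A)" by (simp add: algebra_simps)
  then have X: "X = 2 * A" by simp
  have "(2 * n + 1) choose n = (2 * n + 1) choose Suc n"
    by (subst binomial_symmetric) auto
  then have A: "real (Suc n) * A = real (2 * n + 1) * B"
    using arg_cong[OF Suc_times_binomial[of n "2 * n"], of real]
    unfolding A_def B_def of_nat_mult by simp
  have "real (n + 2) * catalan (n + 1) = X" by (simp add: catalan_def X_def)
  also have "\<dots> = (4 * real n + 2) * catalan n"
    unfolding X using A by (simp add: catalan_def B_def field_simps)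
  finally show ?thesis .
qed

lemma pcoef_1_eq_catalan: "of_int (pcoef 1 n) = catalan n"
proof (induction n)
  case (Suc n)
  have "real (n + 2) * of_int (pcoef 1 (n + 1)) = real (n + 2) * catalan (n + 1)"
    using pcoef_1_Suc[of n] catalan_Suc[of n] Suc by simp
  then show ?case by simp
qed (simp add: pcoef_0 catalan_def)

lemma catalan_convolution: "catalan (Suc n) = (\<Sum>j\<le>n. catalan j * catalan (n - j))"
  using arg_cong[OF pcoef_Suc[of 1 n], of real_of_int] pcoef_1_eq_catalan
  by (simp add: pcoef_1_eq_catalan[simplified])

definition lead_const :: "nat \<Rightarrow> complex" where
  "lead_const i = complex_of_real (catalan (i - 2)) / 2 ^ (3 * i - 5)"

lemma lead_const_recurrence:
  assumes "i \<ge> 3"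
  shows "lead_const i = (\<Sum>a\<in>{2..<i}. lead_const a * lead_const (i + 1 - a)) / 4"
proof -
  obtain k where k: "i = k + 3" using assms by (metis add.commute le_Suc_ex)
  have summand: "lead_const (j + 2) * lead_const (k + 4 - (j + 2))
      = complex_of_real (catalan j * catalan (k - j)) / 2 ^ (3 * k + 2)" if "j \<le> k" for j
  proof -
    have "3 * (k + 4 - (j + 2)) - 5 = 3 * (k - j) + 1" "k + 4 - (j + 2) - 2 = k - j"
      using that by simp_all
    moreover have "(2::complex) ^ (3 * j + 1) * 2 ^ (3 * (k - j) + 1) = 2 ^ (3 * k + 2)"
      using that by (simp flip: power_add) (simp add: algebra_simps)
    ultimately show ?thesis by (simp add: lead_const_def field_simps)
  qed
  have "(\<Sum>a\<in>{2..<i}. lead_const a * lead_const (i + 1 - a))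
      = (\<Sum>j\<le>k. lead_const (j + 2) * lead_const (k + 4 - (j + 2)))"
    unfolding k by (rule sum.reindex_bij_witness[of _ "\<lambda>j. j + 2" "\<lambda>a. a - 2"]) (auto dest!: le_Suc_ex)
  also have "\<dots> = (\<Sum>j\<le>k. complex_of_real (catalan j * catalan (k - j)) / 2 ^ (3 * k + 2))"
    using summand by (intro sum.cong) auto
  also have "\<dots> = complex_of_real (catalan (Suc k)) / 2 ^ (3 * k + 2)"
    by (simp add: catalan_convolution sum_divide_distrib)
  also have "\<dots> = 4 * lead_const i"
    by (simp add: lead_const_def k eval_nat_numeral)
  finally show ?thesis by simp
qed

section \<open>Convergence in the disc of radius \<open>1/4\<close>\<close>

abbreviation radius_ge_quarter :: "complex fps \<Rightarrow> bool" where
  "radius_ge_quarter f \<equiv> ereal (1/4) \<le> fps_conv_radius f"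

lemma radius_ge_quarter_add: "radius_ge_quarter f \<Longrightarrow> radius_ge_quarter g \<Longrightarrow> radius_ge_quarter (f + g)"
  using fps_conv_radius_add[of f g] by (simp add: min_def split: if_splits)

lemma radius_ge_quarter_mult: "radius_ge_quarter f \<Longrightarrow> radius_ge_quarter g \<Longrightarrow> radius_ge_quarter (f * g)"
  using fps_conv_radius_mult[of f g] by (simp add: min_def split: if_splits)

lemma radius_ge_quarter_sum:
  "(\<And>x. x \<in> A \<Longrightarrow> radius_ge_quarter (f x)) \<Longrightarrow> radius_ge_quarter (sum f A)"
  by (induction A rule: infinite_finite_induct) (simp_all add: radius_ge_quarter_add)

lemma radius_ge_quarter_deriv: "radius_ge_quarter f \<Longrightarrow> radius_ge_quarter ((fps_deriv ^^ r) f)"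
proof (induction r)
  case (Suc r)
  then show ?case using fps_conv_radius_deriv[of "(fps_deriv ^^ r) f"] by simp
qed simp

lemma radius_ge_quarter_inverse_rt_fps: "radius_ge_quarter (inverse rt_fps)"
proof -
  have "fps_conv_radius (inverse rt_fps) \<ge> min (ereal (1/4)) (fps_conv_radius rt_fps)"
    by (rule fps_conv_radius_inverse) (use eval_rt_fps rt_nonzero in auto)
  then show ?thesis using rt_fps_conv_radius by (simp add: min_def split: if_splits)
qed

lemma radius_ge_quarter_afps_1: "radius_ge_quarter (afps 1)"
proof -
  have "fps_conv_radius (fps_X * afps 1) = fps_conv_radius (1 - rt_fps)"
    unfolding X_mult_afps_1 by (rule fps_conv_radius_cmult_left) simp
  also have "fps_conv_radius (1 - rt_fps) \<ge> fps_conv_radius rt_fps"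
    using fps_conv_radius_diff[of 1 rt_fps] by simp
  finally have "radius_ge_quarter (fps_X * afps 1)"
    using rt_fps_conv_radius by simp
  moreover have "afps 1 = fps_shift 1 (fps_X * afps 1)" by (simp add: fps_eq_iff)
  ultimately show ?thesis by (metis fps_conv_radius_shift)
qed

text \<open>The sum in \<open>afps_recurrence\<close> contains the term 2 a_1 a_i; moving it to the left produces
  the factor 1 - 2 z a_1 = sqrt(1 - 4z).\<close>
lemma afps_mult_rt_fps:
  assumes "i \<ge> 2"
  shows "afps i * rt_fps = fps_X ^ (i - 2) * taylor_part i
           + fps_X * (\<Sum>a\<in>{2..<i}. afps a * afps (i + 1 - a))"
proof -
  define Q where "Q = (\<Sum>a\<in>{2..<i}. afps a * afps (i + 1 - a))"
  have "{1..i} = insert 1 (insert i {2..<i})" using assms by auto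
  then have "(\<Sum>a\<in>{1..i}. afps a * afps (i + 1 - a)) = afps 1 * afps i + (afps i * afps 1 + Q)"
    using assms by (simp add: Q_def)
  then have "afps i = fps_X ^ (i - 2) * taylor_part i + fps_X * (afps 1 * afps i + (afps i * afps 1 + Q))"
    using afps_recurrence[OF assms] by simp
  also have "\<dots> = fps_X ^ (i - 2) * taylor_part i + fps_X * Q + 2 * fps_X * afps 1 * afps i"
    by (simp add: algebra_simps)
  finally have "afps i = fps_X ^ (i - 2) * taylor_part i + fps_X * Q + 2 * fps_X * afps 1 * afps i" .
  then have "afps i * (1 - 2 * fps_X * afps 1) = fps_X ^ (i - 2) * taylor_part i + fps_X * Q"
    by (simp add: algebra_simps)
  then show ?thesis unfolding one_minus_2X_afps_1 Q_def .
qed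

lemma radius_ge_quarter_afps_scaled_if:
  assumes "k \<ge> 1" "k \<ge> 2 \<Longrightarrow> radius_ge_quarter (afps k)"
  shows "radius_ge_quarter (afps_scaled k)"
proof (cases "k = 1")
  case True
  show ?thesis unfolding True afps_scaled_1
    by (rule radius_ge_quarter_mult[OF _ radius_ge_quarter_afps_1]) simp
qed (use assms afps_scaled_eq_shift[of k] in simp)

lemma radius_ge_quarter_afps: "radius_ge_quarter (afps i)"
proof (induction i rule: less_induct)
  case (less i)
  show ?case
  proof (cases "i \<ge> 2")
    case False
    then have "i = 0 \<or> i = 1" by auto
    then show ?thesis using afps_0 radius_ge_quarter_afps_1 by auto
  next
    case True
    have scaled: "radius_ge_quarter (afps_scaled k)" if "k \<in> {1..<i}" for k
      using that less by (intro radius_ge_quarter_afps_scaled_if) auto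
    have "radius_ge_quarter (fps_X ^ (i - 2) * taylor_part i
           + fps_X * (\<Sum>a\<in>{2..<i}. afps a * afps (i + 1 - a)))"
      unfolding taylor_part_def
      by (intro radius_ge_quarter_add radius_ge_quarter_mult radius_ge_quarter_sum
          radius_ge_quarter_deriv scaled less) auto
    moreover have "afps i = afps i * rt_fps * inverse rt_fps"
      using rt_fps_nth_0 by (simp add: inverse_mult_eq_1' mult.assoc)
    ultimately show ?thesis
      using afps_mult_rt_fps[OF True] radius_ge_quarter_inverse_rt_fps
      by (metis radius_ge_quarter_mult)
  qed
qed

lemma radius_ge_quarter_afps_scaled: "k \<ge> 1 \<Longrightarrow> radius_ge_quarter (afps_scaled k)"
  by (simp add: radius_ge_quarter_afps_scaled_if radius_ge_quarter_afps)

abbreviation scaled_deriv :: "nat \<Rightarrow> nat \<Rightarrow> complex \<Rightarrow> complex" where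
  "scaled_deriv k r \<equiv> eval_fps ((fps_deriv ^^ r) (afps_scaled k))"

lemma eval_fps_sum_quarter:
  "(\<And>x. x \<in> A \<Longrightarrow> radius_ge_quarter (h x)) \<Longrightarrow> norm z < 1/4
     \<Longrightarrow> eval_fps (sum h A) z = (\<Sum>x\<in>A. eval_fps (h x) z)"
proof (induction A rule: infinite_finite_induct)
  case (insert x A)
  then show ?case by (simp add: eval_fps_add norm_less_conv_radius radius_ge_quarter_sum)
qed simp_all

lemma eval_fps_mult_quarter:
  "radius_ge_quarter f \<Longrightarrow> radius_ge_quarter g \<Longrightarrow> norm z < 1/4
     \<Longrightarrow> eval_fps (f * g) z = eval_fps f z * eval_fps g z"
  by (intro eval_fps_mult norm_less_conv_radius)

lemma eval_afps_1:
  assumes z: "norm z < 1/4"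
  shows "z * agen 1 z = (1 - rt z) / 2"
proof -
  have "z * agen 1 z = eval_fps (fps_X * afps 1) z"
    using z radius_ge_quarter_afps_1 by (simp add: agen_eq_eval_fps eval_fps_mult_quarter)
  also have "\<dots> = eval_fps (fps_const (1/2) * (1 - rt_fps)) z"
    by (simp only: X_mult_afps_1)
  also have "\<dots> = (1 - rt z) / 2"
  proof -
    have "radius_ge_quarter (1 - rt_fps)"
      using fps_conv_radius_diff[of 1 rt_fps] rt_fps_conv_radius by simp
    then show ?thesis
      using z norm_less_conv_radius[OF rt_fps_conv_radius z]
      by (simp add: eval_fps_mult_quarter eval_fps_diff eval_rt_fps)
  qed
  finally show ?thesis .
qed

lemma rt_mult_agen:
  assumes i: "i \<ge> 2" and z: "norm z < 1/4"
  shows "rt z * agen i z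
       = z ^ (i - 2) * (\<Sum>k\<in>{1..<i}. (1 / fact (i - 1 - k)) * scaled_deriv k (i - 1 - k) z)
         + z * (\<Sum>a\<in>{2..<i}. agen a z * agen (i + 1 - a) z)"
proof -
  have rad_taylor: "radius_ge_quarter
      (fps_const (1 / fact (i - 1 - k)) * (fps_deriv ^^ (i - 1 - k)) (afps_scaled k))"
    if "k \<in> {1..<i}" for k
    using that by (intro radius_ge_quarter_mult radius_ge_quarter_deriv radius_ge_quarter_afps_scaled) auto
  have rad_prod: "radius_ge_quarter (afps a * afps (i + 1 - a))" for a
    by (intro radius_ge_quarter_mult radius_ge_quarter_afps)
  have "eval_fps (taylor_part i) z
      = (\<Sum>k\<in>{1..<i}. (1 / fact (i - 1 - k)) * scaled_deriv k (i - 1 - k) z)"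
    unfolding taylor_part_def using z rad_taylor
    by (subst eval_fps_sum_quarter)
      (auto intro!: sum.cong simp: eval_fps_mult_quarter radius_ge_quarter_deriv radius_ge_quarter_afps_scaled)
  moreover have "eval_fps (\<Sum>a\<in>{2..<i}. afps a * afps (i + 1 - a)) z
      = (\<Sum>a\<in>{2..<i}. agen a z * agen (i + 1 - a) z)"
    using z rad_prod
    by (subst eval_fps_sum_quarter) (auto simp: eval_fps_mult_quarter radius_ge_quarter_afps agen_eq_eval_fps)
  moreover have "radius_ge_quarter (taylor_part i)"
    unfolding taylor_part_def using rad_taylor by (intro radius_ge_quarter_sum) auto
  moreover have "radius_ge_quarter (\<Sum>a\<in>{2..<i}. afps a * afps (i + 1 - a))"
    using rad_prod by (intro radius_ge_quarter_sum)
  ultimately have "eval_fps (fps_X ^ (i - 2) * taylor_part i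
           + fps_X * (\<Sum>a\<in>{2..<i}. afps a * afps (i + 1 - a))) z
      = z ^ (i - 2) * (\<Sum>k\<in>{1..<i}. (1 / fact (i - 1 - k)) * scaled_deriv k (i - 1 - k) z)
         + z * (\<Sum>a\<in>{2..<i}. agen a z * agen (i + 1 - a) z)"
    using z by (simp add: eval_fps_add norm_less_conv_radius eval_fps_mult_quarter radius_ge_quarter_mult)
  moreover have "rt z * agen i z = eval_fps (afps i * rt_fps) z"
    using z radius_ge_quarter_afps
    by (simp add: eval_fps_mult_quarter rt_fps_conv_radius eval_rt_fps agen_eq_eval_fps)
  ultimately show ?thesis by (simp only: afps_mult_rt_fps[OF i])
qed

section \<open>Singular behaviour at \<open>1/4\<close>\<close>

text \<open>A disc around 1/4 that avoids 0, so that z^(2-k) is holomorphic on it.\<close>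
definition quarter_ball :: "complex set" where
  "quarter_ball = ball (1/4) (1/8)"

definition quarter_dom :: "complex set" where
  "quarter_dom = quarter_ball \<inter> ball 0 (1/4)"

lemma quarter_dom_norm: "z \<in> quarter_dom \<Longrightarrow> norm z < 1/4"
  by (simp add: quarter_dom_def)

lemma quarter_dom_nonzero: "z \<in> quarter_dom \<Longrightarrow> z \<noteq> 0"
  by (auto simp: quarter_dom_def quarter_ball_def)

lemma rt_nonzero_quarter_dom: "z \<in> quarter_dom \<Longrightarrow> rt z \<noteq> 0"
  using rt_nonzero quarter_dom_norm by blast

lemma at_quarter_within_quarter_dom: "at (1/4) within ball 0 (1/4) = at (1/4) within quarter_dom"
  by (rule at_within_nhd[of _ quarter_ball]) (auto simp: quarter_dom_def quarter_ball_def)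

lemma tendsto_quarter_of_holomorphic:
  assumes "h holomorphic_on quarter_ball"
  shows "(h \<longlongrightarrow> h (1/4)) (at (1/4) within quarter_dom)"
proof -
  have "open quarter_ball" "1/4 \<in> quarter_ball" by (simp_all add: quarter_ball_def)
  then have "isCont h (1/4)"
    using assms holomorphic_on_imp_continuous_on continuous_on_eq_continuous_at by blast
  then show ?thesis using isCont_def tendsto_within_subset by blast
qed

lemma rt_has_field_derivative:
  "z \<in> quarter_dom \<Longrightarrow> (rt has_field_derivative (-2 / rt z)) (at z)"
  unfolding rt_def
  by (rule has_field_derivative_csqrt'[THEN DERIV_cong])
    (auto intro!: derivative_eq_intros one_minus_4z_notin_nonpos_Reals quarter_dom_norm)

lemma rt_tendsto_0: "(rt \<longlongrightarrow> 0) (at (1/4) within quarter_dom)"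
proof -
  have "((\<lambda>z. sqrt (norm (1 - 4 * z))) \<longlongrightarrow> sqrt (norm (1 - 4 * (1/4::complex))))
      (at (1/4) within quarter_dom)"
    by (intro tendsto_intros)
  then have "((\<lambda>z. norm (rt z)) \<longlongrightarrow> 0) (at (1/4) within quarter_dom)"
    by (simp add: rt_def norm_csqrt)
  then show ?thesis by (simp add: tendsto_norm_zero_iff)
qed

inductive_set rt_algebra :: "(complex \<Rightarrow> complex) set" where
  holomorphic: "h holomorphic_on quarter_ball \<Longrightarrow> h \<in> rt_algebra"
| rt: "rt \<in> rt_algebra"
| add: "p \<in> rt_algebra \<Longrightarrow> q \<in> rt_algebra \<Longrightarrow> (\<lambda>z. p z + q z) \<in> rt_algebra"
| mult: "p \<in> rt_algebra \<Longrightarrow> q \<in> rt_algebra \<Longrightarrow> (\<lambda>z. p z * q z) \<in> rt_algebra"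

lemma rt_algebra_const: "(\<lambda>z. c) \<in> rt_algebra"
  by (rule rt_algebra.holomorphic) simp

lemma rt_algebra_tendsto: "p \<in> rt_algebra \<Longrightarrow> \<exists>L. (p \<longlongrightarrow> L) (at (1/4) within quarter_dom)"
proof (induction rule: rt_algebra.induct)
  case (add p q)
  then show ?case by (blast intro: tendsto_add)
next
  case (mult p q)
  then show ?case by (blast intro: tendsto_mult)
qed (blast intro: tendsto_quarter_of_holomorphic rt_tendsto_0)+

lemma rt_algebra_deriv:
  "p \<in> rt_algebra \<Longrightarrow> \<exists>q\<in>rt_algebra. \<forall>z\<in>quarter_dom. (p has_field_derivative q z / rt z) (at z)"
proof (induction rule: rt_algebra.induct)
  case (holomorphic h)
  have "open quarter_ball" by (simp add: quarter_ball_def)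
  have "(h has_field_derivative deriv h z * rt z / rt z) (at z)" if "z \<in> quarter_dom" for z
  proof -
    have "z \<in> quarter_ball" using that by (simp add: quarter_dom_def)
    then have "(h has_field_derivative deriv h z) (at z)"
      using holomorphic \<open>open quarter_ball\<close> by (rule holomorphic_derivI[rotated 2])
    then show ?thesis using rt_nonzero_quarter_dom[OF that] by simp
  qed
  moreover have "deriv h holomorphic_on quarter_ball"
    using holomorphic \<open>open quarter_ball\<close> by (rule holomorphic_deriv)
  then have "(\<lambda>z. deriv h z * rt z) \<in> rt_algebra"
    by (rule rt_algebra.mult[OF rt_algebra.holomorphic rt_algebra.rt])
  ultimately show ?case by (intro bexI[of _ "\<lambda>z. deriv h z * rt z"] ballI)
next
  case rt
  show ?case
    using rt_has_field_derivative by (intro bexI[of _ "\<lambda>_. -2"] ballI rt_algebra_const) auto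
next
  case (add p q)
  then obtain p' q' where p': "p' \<in> rt_algebra" "\<forall>z\<in>quarter_dom. (p has_field_derivative p' z / rt z) (at z)"
    and q': "q' \<in> rt_algebra" "\<forall>z\<in>quarter_dom. (q has_field_derivative q' z / rt z) (at z)"
    by blast
  show ?case
  proof (rule bexI[of _ "\<lambda>z. p' z + q' z"], rule ballI)
    fix z assume "z \<in> quarter_dom"
    then have "((\<lambda>z. p z + q z) has_field_derivative p' z / rt z + q' z / rt z) (at z)"
      using p'(2) q'(2) by (intro DERIV_add) auto
    then show "((\<lambda>z. p z + q z) has_field_derivative (p' z + q' z) / rt z) (at z)"
      by (simp add: add_divide_distrib)
  qed (use p' q' in \<open>intro rt_algebra.add\<close>)
next
  case (mult p q)
  then obtain p' q' where p': "p' \<in> rt_algebra" "\<forall>z\<in>quarter_dom. (p has_field_derivative p' z / rt z) (at z)"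
    and q': "q' \<in> rt_algebra" "\<forall>z\<in>quarter_dom. (q has_field_derivative q' z / rt z) (at z)"
    by blast
  show ?case
  proof (rule bexI[of _ "\<lambda>z. p z * q' z + p' z * q z"], rule ballI)
    fix z assume "z \<in> quarter_dom"
    then have "((\<lambda>z. p z * q z) has_field_derivative p' z / rt z * q z + q' z / rt z * p z) (at z)"
      using p'(2) q'(2) by (intro DERIV_mult) auto
    then show "((\<lambda>z. p z * q z) has_field_derivative (p z * q' z + p' z * q z) / rt z) (at z)"
      by (rule DERIV_cong) (simp add: add_divide_distrib algebra_simps)
  qed (use mult p' q' in \<open>intro rt_algebra.add rt_algebra.mult\<close>)
qed

text \<open>\<open>rt_pole f k c\<close> says f(z) = q(z) / sqrt(1 - 4z)^k near 1/4 with q \<in> \<open>rt_algebra\<close> and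
  q(z) \<rightarrow> c; for c \<noteq> 0 this means f(z) \<sim> c (1 - 4z)^(-k/2).\<close>
definition rt_pole_le :: "(complex \<Rightarrow> complex) \<Rightarrow> nat \<Rightarrow> bool" where
  "rt_pole_le f k \<longleftrightarrow> (\<exists>q\<in>rt_algebra. \<forall>z\<in>quarter_dom. f z = q z / rt z ^ k)"

definition rt_pole :: "(complex \<Rightarrow> complex) \<Rightarrow> nat \<Rightarrow> complex \<Rightarrow> bool" where
  "rt_pole f k c \<longleftrightarrow> (\<exists>q\<in>rt_algebra. (\<forall>z\<in>quarter_dom. f z = q z / rt z ^ k)
                        \<and> (q \<longlongrightarrow> c) (at (1/4) within quarter_dom))"

lemma rt_pole_imp_rt_pole_le: "rt_pole f k c \<Longrightarrow> rt_pole_le f k"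
  unfolding rt_pole_def rt_pole_le_def by blast

lemma rt_pole_le_imp_rt_pole_Suc: "rt_pole_le f k \<Longrightarrow> rt_pole f (Suc k) 0"
proof -
  assume "rt_pole_le f k"
  then obtain q where q: "q \<in> rt_algebra" "\<forall>z\<in>quarter_dom. f z = q z / rt z ^ k"
    by (auto simp: rt_pole_le_def)
  obtain L where "(q \<longlongrightarrow> L) (at (1/4) within quarter_dom)"
    using rt_algebra_tendsto[OF q(1)] by blast
  then have "((\<lambda>z. q z * rt z) \<longlongrightarrow> L * 0) (at (1/4) within quarter_dom)"
    by (intro tendsto_mult rt_tendsto_0)
  then show ?thesis unfolding rt_pole_def using q rt_nonzero_quarter_dom
    by (intro bexI[of _ "\<lambda>z. q z * rt z"] conjI rt_algebra.mult rt_algebra.rt) auto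
qed

lemma rt_pole_cong: "rt_pole f k c \<Longrightarrow> (\<And>z. z \<in> quarter_dom \<Longrightarrow> f z = g z) \<Longrightarrow> rt_pole g k c"
  unfolding rt_pole_def by auto

lemma rt_pole_le_cong:
  "rt_pole_le f k \<Longrightarrow> (\<And>z. z \<in> quarter_dom \<Longrightarrow> f z = g z) \<Longrightarrow> rt_pole_le g k"
  unfolding rt_pole_le_def by auto

lemma rt_pole_add: "rt_pole f k a \<Longrightarrow> rt_pole g k b \<Longrightarrow> rt_pole (\<lambda>z. f z + g z) k (a + b)"
  unfolding rt_pole_def
  by (elim bexE conjE, rule_tac x="\<lambda>z. qa z + q z" in bexI)
    (auto intro: tendsto_add rt_algebra.add simp: add_divide_distrib add.commute)

lemma rt_pole_mult: "rt_pole f j a \<Longrightarrow> rt_pole g k b \<Longrightarrow> rt_pole (\<lambda>z. f z * g z) (j + k) (a * b)"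
  unfolding rt_pole_def
  by (elim bexE conjE, rule_tac x="\<lambda>z. qa z * q z" in bexI)
    (auto intro: tendsto_mult rt_algebra.mult simp: power_add mult.commute)

lemma rt_pole_sum:
  "finite A \<Longrightarrow> (\<And>x. x \<in> A \<Longrightarrow> rt_pole (f x) k (c x))
     \<Longrightarrow> rt_pole (\<lambda>z. \<Sum>x\<in>A. f x z) k (\<Sum>x\<in>A. c x)"
proof (induction A rule: finite_induct)
  case empty
  show ?case unfolding rt_pole_def by (auto intro!: bexI[of _ "\<lambda>_. 0"] rt_algebra_const)
qed (auto intro: rt_pole_add)

lemma rt_pole_holomorphic_mult:
  assumes "h holomorphic_on quarter_ball" "rt_pole f k a"
  shows "rt_pole (\<lambda>z. h z * f z) k (h (1/4) * a)"
proof -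
  have "rt_pole h 0 (h (1/4))"
    unfolding rt_pole_def using assms(1) tendsto_quarter_of_holomorphic
    by (intro bexI[of _ h]) (auto intro: rt_algebra.holomorphic)
  from rt_pole_mult[OF this assms(2)] show ?thesis by simp
qed

lemma rt_pole_le_holomorphic_mult:
  "h holomorphic_on quarter_ball \<Longrightarrow> rt_pole_le f k \<Longrightarrow> rt_pole_le (\<lambda>z. h z * f z) k"
  unfolding rt_pole_le_def
  by (elim bexE, rule_tac x="\<lambda>z. h z * q z" in bexI) (auto intro: rt_algebra.mult rt_algebra.holomorphic)

lemma rt_pole_div_rt:
  assumes "rt_pole (\<lambda>z. rt z * f z) k c"
  shows "rt_pole f (Suc k) c"
proof -
  obtain q where q: "q \<in> rt_algebra" "\<forall>z\<in>quarter_dom. rt z * f z = q z / rt z ^ k"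
    "(q \<longlongrightarrow> c) (at (1/4) within quarter_dom)"
    using assms by (auto simp: rt_pole_def)
  have "f z = q z / rt z ^ Suc k" if "z \<in> quarter_dom" for z
    using bspec[OF q(2) that] rt_nonzero_quarter_dom[OF that] by (simp add: field_simps)
  then show ?thesis unfolding rt_pole_def using q(1,3) by blast
qed

lemma rt_pole_tendsto:
  assumes "rt_pole f k c"
  shows "((\<lambda>z. f z * rt z ^ k) \<longlongrightarrow> c) (at (1/4) within quarter_dom)"
proof -
  obtain q where q: "\<forall>z\<in>quarter_dom. f z = q z / rt z ^ k" "(q \<longlongrightarrow> c) (at (1/4) within quarter_dom)"
    using assms by (auto simp: rt_pole_def)
  have "eventually (\<lambda>z. q z = f z * rt z ^ k) (at (1/4) within quarter_dom)"
    unfolding eventually_at_filter using q(1) rt_nonzero_quarter_dom by (auto intro!: always_eventually)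
  from tendsto_cong[OF this] q(2) show ?thesis by simp
qed

lemma deriv_rt_quotient:
  assumes q: "q \<in> rt_algebra" and f: "\<And>z. z \<in> quarter_dom \<Longrightarrow> f z = q z / rt z ^ k"
  shows "\<exists>q'\<in>rt_algebra. \<forall>z\<in>quarter_dom.
           deriv f z = (q' z * rt z + 2 * of_nat k * q z) / rt z ^ (k + 2)"
proof -
  obtain q' where q': "q' \<in> rt_algebra" "\<forall>z\<in>quarter_dom. (q has_field_derivative q' z / rt z) (at z)"
    using rt_algebra_deriv[OF q] by blast
  have "deriv f z = (q' z * rt z + 2 * of_nat k * q z) / rt z ^ (k + 2)" if z: "z \<in> quarter_dom" for z
  proof -
    have nz: "rt z \<noteq> 0" using rt_nonzero_quarter_dom[OF z] .
    have "((\<lambda>w. rt w ^ k) has_field_derivative of_nat k * ((-2 / rt z) * rt z ^ (k - Suc 0))) (at z)"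
      using rt_has_field_derivative[OF z] by (rule DERIV_power)
    then have d: "((\<lambda>w. q w / rt w ^ k) has_field_derivative
        (q' z / rt z * rt z ^ k - q z * (of_nat k * ((-2 / rt z) * rt z ^ (k - Suc 0)))) / (rt z ^ k * rt z ^ k)) (at z)"
      using q'(2) z nz by (intro DERIV_divide) auto
    have e: "(q' z / rt z * rt z ^ k - q z * (of_nat k * ((-2 / rt z) * rt z ^ (k - Suc 0))))
          / (rt z ^ k * rt z ^ k) = (q' z * rt z + 2 * of_nat k * q z) / rt z ^ (k + 2)"
    proof (cases k)
      case 0 then show ?thesis using nz by (simp add: field_simps power2_eq_square)
    next
      case (Suc m) then show ?thesis using nz by (simp add: field_simps power2_eq_square)
    qed
    have "open quarter_dom" by (simp add: quarter_dom_def quarter_ball_def open_Int)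
    with d have "(f has_field_derivative (q' z * rt z + 2 * of_nat k * q z) / rt z ^ (k + 2)) (at z)"
      unfolding e by (rule has_field_derivative_transform_within_open[OF _ _ z]) (simp add: f)
    then show ?thesis by (rule DERIV_imp_deriv)
  qed
  then show ?thesis using q'(1) by blast
qed

lemma rt_pole_le_deriv:
  assumes "rt_pole_le f k" "\<And>z. z \<in> quarter_dom \<Longrightarrow> g z = deriv f z"
  shows "rt_pole_le g (k + 2)"
proof -
  obtain q where q: "q \<in> rt_algebra" "\<forall>z\<in>quarter_dom. f z = q z / rt z ^ k"
    using assms(1) by (auto simp: rt_pole_le_def)
  obtain q' where "q' \<in> rt_algebra"
    "\<forall>z\<in>quarter_dom. deriv f z = (q' z * rt z + 2 * of_nat k * q z) / rt z ^ (k + 2)"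
    using deriv_rt_quotient[OF q(1)] q(2) by blast
  then show ?thesis unfolding rt_pole_le_def using q(1) assms(2)
    by (intro bexI[of _ "\<lambda>z. q' z * rt z + 2 * of_nat k * q z"])
      (auto intro!: rt_algebra.add rt_algebra.mult rt_algebra.rt rt_algebra_const)
qed

lemma rt_pole_le_0_deriv:
  assumes "rt_pole_le f 0" "\<And>z. z \<in> quarter_dom \<Longrightarrow> g z = deriv f z"
  shows "rt_pole_le g 1"
proof -
  obtain q where q: "q \<in> rt_algebra" "\<forall>z\<in>quarter_dom. f z = q z / rt z ^ 0"
    using assms(1) by (auto simp: rt_pole_le_def)
  obtain q' where "q' \<in> rt_algebra"
    "\<forall>z\<in>quarter_dom. deriv f z = (q' z * rt z + 2 * of_nat 0 * q z) / rt z ^ (0 + 2)"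
    using deriv_rt_quotient[OF q(1), of f 0] q(2) by blast
  moreover have "\<forall>z\<in>quarter_dom. g z = q' z / rt z ^ 1"
    using calculation(2) assms(2) rt_nonzero_quarter_dom by (simp add: power2_eq_square)
  ultimately show ?thesis unfolding rt_pole_le_def by blast
qed

section \<open>The leading singular term of \<open>a\<^sub>i\<close>\<close>

lemma scaled_deriv_Suc:
  assumes "z \<in> quarter_dom" "k \<ge> 1"
  shows "scaled_deriv k (Suc r) z = deriv (scaled_deriv k r) z"
  using eval_fps_deriv[OF norm_less_conv_radius[OF radius_ge_quarter_deriv[OF
        radius_ge_quarter_afps_scaled[OF assms(2)]] quarter_dom_norm[OF assms(1)]]]
  by simp

lemma rt_pole_le_scaled_deriv:
  "k \<ge> 1 \<Longrightarrow> rt_pole_le (scaled_deriv k 0) p \<Longrightarrow> rt_pole_le (scaled_deriv k r) (p + 2 * r)"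
proof (induction r)
  case (Suc r)
  then have "rt_pole_le (scaled_deriv k (Suc r)) (p + 2 * r + 2)"
    by (intro rt_pole_le_deriv) (use scaled_deriv_Suc in auto)
  then show ?case by simp
qed simp

lemma eval_afps_scaled_1:
  assumes "z \<in> quarter_dom"
  shows "scaled_deriv 1 0 z = (1 - rt z) / 2"
proof -
  have "scaled_deriv 1 0 z = eval_fps (fps_X * afps 1) z"
    by (simp only: funpow_0 afps_scaled_1)
  also have "\<dots> = z * agen 1 z"
    using quarter_dom_norm[OF assms] radius_ge_quarter_afps_1
    by (simp add: eval_fps_mult_quarter agen_eq_eval_fps)
  finally show ?thesis using eval_afps_1[OF quarter_dom_norm[OF assms]] by simp
qed

lemma rt_algebra_half_one_minus_rt: "(\<lambda>z. (1 - rt z) / 2) \<in> rt_algebra"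
proof -
  have "(\<lambda>z. (1/2) + (-1/2) * rt z) \<in> rt_algebra"
    by (intro rt_algebra.intros rt_algebra_const)
  then show ?thesis by (simp add: diff_divide_distrib)
qed

lemma rt_pole_le_scaled_deriv_1: "r \<ge> 1 \<Longrightarrow> rt_pole_le (scaled_deriv 1 r) (2 * r - 1)"
proof (induction r)
  case (Suc r)
  show ?case
  proof (cases "r = 0")
    case True
    have "rt_pole_le (scaled_deriv 1 0) 0"
      unfolding rt_pole_le_def using rt_algebra_half_one_minus_rt
      by (intro bexI[of _ "\<lambda>z. (1 - rt z) / 2"] ballI) (use eval_afps_scaled_1 in auto)
    then have "rt_pole_le (scaled_deriv 1 (Suc 0)) 1"
      by (rule rt_pole_le_0_deriv) (use scaled_deriv_Suc[of _ 1 0] in auto)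
    then show ?thesis using True by simp
  next
    case False
    then have "rt_pole_le (scaled_deriv 1 (Suc r)) (2 * r - 1 + 2)"
      using Suc by (intro rt_pole_le_deriv) (use scaled_deriv_Suc in auto)
    then show ?thesis using False by (simp add: algebra_simps)
  qed
qed simp

lemma rt_pole_agen_2: "rt_pole (agen 2) 1 (lead_const 2)"
proof -
  have "rt_pole (\<lambda>z. (1 - rt z) / 2) 0 (lead_const 2)"
    unfolding rt_pole_def using rt_algebra_half_one_minus_rt
    by (intro bexI[of _ "\<lambda>z. (1 - rt z) / 2"] conjI)
      (auto intro!: tendsto_eq_intros rt_tendsto_0 simp: lead_const_def catalan_def)
  moreover have "(1 - rt z) / 2 = rt z * agen 2 z" if "z \<in> quarter_dom" for z
  proof -
    have "{1..<2::nat} = {1}" by auto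
    then have "rt z * agen 2 z = scaled_deriv 1 0 z"
      using rt_mult_agen[of 2 z] quarter_dom_norm[OF that] by simp
    then show ?thesis using eval_afps_scaled_1[OF that] by simp
  qed
  ultimately have "rt_pole (\<lambda>z. rt z * agen 2 z) 0 (lead_const 2)"
    by (rule rt_pole_cong)
  from rt_pole_div_rt[OF this] show ?thesis by simp
qed

lemma rt_pole_le_taylor_terms:
  assumes "i \<ge> 3" "k \<in> {1..<i}" "k \<ge> 2 \<Longrightarrow> rt_pole (agen k) (2 * k - 3) c"
  shows "rt_pole_le (scaled_deriv k (i - 1 - k)) (2 * i - 5)"
proof (cases "k = 1")
  case True
  then show ?thesis
    using assms rt_pole_le_scaled_deriv_1[of "i - 2"] by (simp add: numeral_eq_Suc)
next
  case False
  with assms have k: "k \<ge> 2" "k < i" by auto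
  have "rt_pole_le (\<lambda>z. 1 / z ^ (k - 2) * agen k z) (2 * k - 3)"
    using assms(3) k
    by (intro rt_pole_le_holomorphic_mult rt_pole_imp_rt_pole_le holomorphic_intros)
      (auto simp: quarter_ball_def dist_norm)
  moreover have "1 / z ^ (k - 2) * agen k z = scaled_deriv k 0 z" if "z \<in> quarter_dom" for z
  proof -
    have "agen k z = eval_fps (fps_X ^ (k - 2) * afps_scaled k) z"
      using afps_eq_X_power_mult[of k] k by (simp add: agen_eq_eval_fps)
    also have "\<dots> = z ^ (k - 2) * scaled_deriv k 0 z"
      using quarter_dom_norm[OF that] radius_ge_quarter_afps_scaled[of k] k
      by (simp add: eval_fps_mult_quarter)
    finally show ?thesis using quarter_dom_nonzero[OF that] by simp
  qed
  ultimately have "rt_pole_le (scaled_deriv k 0) (2 * k - 3)"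
    by (rule rt_pole_le_cong)
  then have "rt_pole_le (scaled_deriv k (i - 1 - k)) (2 * k - 3 + 2 * (i - 1 - k))"
    using k by (intro rt_pole_le_scaled_deriv) auto
  moreover have "2 * k - 3 + 2 * (i - 1 - k) = 2 * i - 5" using k by auto
  ultimately show ?thesis by simp
qed

lemma rt_pole_taylor_sum:
  assumes i: "i \<ge> 3" and IH: "\<And>k. k < i \<Longrightarrow> 2 \<le> k \<Longrightarrow> rt_pole (agen k) (2 * k - 3) (lead_const k)"
  shows "rt_pole (\<lambda>z. \<Sum>k\<in>{1..<i}. z ^ (i - 2) * (1 / fact (i - 1 - k)) * scaled_deriv k (i - 1 - k) z)
           (2 * i - 4) 0"
proof -
  have "rt_pole (\<lambda>z. \<Sum>k\<in>{1..<i}. z ^ (i - 2) * (1 / fact (i - 1 - k)) * scaled_deriv k (i - 1 - k) z)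
          (2 * i - 4) (\<Sum>k\<in>{1..<i}. 0)"
  proof (rule rt_pole_sum)
    fix k assume k: "k \<in> {1..<i}"
    have "rt_pole_le (\<lambda>z. z ^ (i - 2) * (1 / fact (i - 1 - k)) * scaled_deriv k (i - 1 - k) z) (2 * i - 5)"
      using rt_pole_le_taylor_terms[OF i k] IH k
      by (intro rt_pole_le_holomorphic_mult holomorphic_intros) auto
    then have "rt_pole (\<lambda>z. z ^ (i - 2) * (1 / fact (i - 1 - k)) * scaled_deriv k (i - 1 - k) z)
                (Suc (2 * i - 5)) 0"
      by (rule rt_pole_le_imp_rt_pole_Suc)
    moreover have "Suc (2 * i - 5) = 2 * i - 4" using i by arith
    ultimately show "rt_pole (\<lambda>z. z ^ (i - 2) * (1 / fact (i - 1 - k)) * scaled_deriv k (i - 1 - k) z)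
                       (2 * i - 4) 0"
      by metis
  qed simp
  then show ?thesis by simp
qed

lemma rt_pole_convolution_sum:
  assumes IH: "\<And>k. k < i \<Longrightarrow> 2 \<le> k \<Longrightarrow> rt_pole (agen k) (2 * k - 3) (lead_const k)"
  shows "rt_pole (\<lambda>z. \<Sum>a\<in>{2..<i}. agen a z * agen (i + 1 - a) z)
           (2 * i - 4) (\<Sum>a\<in>{2..<i}. lead_const a * lead_const (i + 1 - a))"
proof (rule rt_pole_sum)
  fix a assume a: "a \<in> {2..<i}"
  then have "rt_pole (\<lambda>z. agen a z * agen (i + 1 - a) z)
              ((2 * a - 3) + (2 * (i + 1 - a) - 3)) (lead_const a * lead_const (i + 1 - a))"
    using IH by (intro rt_pole_mult) auto
  moreover have "(2 * a - 3) + (2 * (i + 1 - a) - 3) = 2 * i - 4" using a by auto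
  ultimately show "rt_pole (\<lambda>z. agen a z * agen (i + 1 - a) z) (2 * i - 4)
                     (lead_const a * lead_const (i + 1 - a))" by simp
qed simp

lemma rt_pole_rt_mult_agen:
  assumes i: "i \<ge> 3" and IH: "\<And>k. k < i \<Longrightarrow> 2 \<le> k \<Longrightarrow> rt_pole (agen k) (2 * k - 3) (lead_const k)"
  shows "rt_pole (\<lambda>z. rt z * agen i z) (2 * i - 4) (lead_const i)"
proof -
  have "rt_pole (\<lambda>z. z * (\<Sum>a\<in>{2..<i}. agen a z * agen (i + 1 - a) z))
          (2 * i - 4) (1/4 * (\<Sum>a\<in>{2..<i}. lead_const a * lead_const (i + 1 - a)))"
    using rt_pole_holomorphic_mult[OF _ rt_pole_convolution_sum[OF IH], of "\<lambda>z. z"] by simp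
  from rt_pole_add[OF rt_pole_taylor_sum[OF i IH] this]
  have "rt_pole (\<lambda>z. rt z * agen i z) (2 * i - 4)
          (0 + 1/4 * (\<Sum>a\<in>{2..<i}. lead_const a * lead_const (i + 1 - a)))"
  proof (rule rt_pole_cong)
    fix z assume "z \<in> quarter_dom"
    then show "(\<Sum>k\<in>{1..<i}. z ^ (i - 2) * (1 / fact (i - 1 - k)) * scaled_deriv k (i - 1 - k) z)
                 + z * (\<Sum>a\<in>{2..<i}. agen a z * agen (i + 1 - a) z) = rt z * agen i z"
      using rt_mult_agen[of i z] i quarter_dom_norm by (simp add: sum_distrib_left mult.assoc)
  qed
  moreover have "0 + 1/4 * (\<Sum>a\<in>{2..<i}. lead_const a * lead_const (i + 1 - a)) = lead_const i"
    using lead_const_recurrence[OF i] by simp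
  ultimately show ?thesis by simp
qed

lemma rt_pole_agen: "i \<ge> 2 \<Longrightarrow> rt_pole (agen i) (2 * i - 3) (lead_const i)"
proof (induction i rule: less_induct)
  case (less i)
  show ?case
  proof (cases "i = 2")
    case False
    with less.prems have i: "i \<ge> 3" by simp
    have "rt_pole (agen i) (Suc (2 * i - 4)) (lead_const i)"
      by (rule rt_pole_div_rt[OF rt_pole_rt_mult_agen[OF i less.IH]])
    moreover have "Suc (2 * i - 4) = 2 * i - 3" using i by arith
    ultimately show ?thesis by metis
  qed (use rt_pole_agen_2 in simp)
qed

lemma powr_eq_rt_power:
  assumes "z \<in> quarter_dom" "i \<ge> 2"
  shows "(1 - 4 * z) powr (complex_of_real ((2 * real i - 3) / 2)) = rt z ^ (2 * i - 3)"
proof -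
  have nz: "1 - 4 * z \<noteq> 0" using rt_nonzero_quarter_dom[OF assms(1)] by (auto simp: rt_def)
  have e: "complex_of_real ((2 * real i - 3) / 2) = of_nat (2 * i - 3) / 2"
    using assms(2) by (simp add: of_nat_diff)
  have "(1 - 4 * z) powr (complex_of_real ((2 * real i - 3) / 2))
      = exp (of_nat (2 * i - 3) * (Ln (1 - 4 * z) / 2))"
    using nz unfolding powr_def e by (simp add: field_simps)
  also have "\<dots> = exp (Ln (1 - 4 * z) / 2) ^ (2 * i - 3)" by (rule exp_of_nat_mult)
  also have "exp (Ln (1 - 4 * z) / 2) = rt z" using nz by (simp add: rt_def csqrt_exp_Ln)
  finally show ?thesis .
qed

lemma lead_const_nonzero: "lead_const i \<noteq> 0"
proof -
  have "catalan (i - 2) > 0" by (simp add: catalan_def)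
  then show ?thesis by (simp add: lead_const_def)
qed

theorem proposition2:
  fixes i :: nat
  assumes "i \<ge> 2"
  shows "((\<lambda>z. agen i z /
            (complex_of_real (catalan (i - 2)) /
              (2 ^ (3 * i - 5) * (1 - 4 * z) powr (of_real ((2 * real i - 3) / 2)))))
          \<longlongrightarrow> 1) (at (1/4) within ball 0 (1/4))"
proof -
  have lim: "((\<lambda>z. agen i z * rt z ^ (2 * i - 3) / lead_const i) \<longlongrightarrow> 1) (at (1/4) within quarter_dom)"
    using tendsto_divide[OF rt_pole_tendsto[OF rt_pole_agen[OF assms]] tendsto_const
        lead_const_nonzero[of i]] lead_const_nonzero[of i]
    by simp
  have "\<forall>\<^sub>F z in at (1/4) within quarter_dom. agen i z * rt z ^ (2 * i - 3) / lead_const i =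
      agen i z / (complex_of_real (catalan (i - 2)) /
        (2 ^ (3 * i - 5) * (1 - 4 * z) powr (of_real ((2 * real i - 3) / 2))))"
    unfolding eventually_at_filter
    by (intro always_eventually allI impI) (use powr_eq_rt_power assms in \<open>simp add: lead_const_def\<close>)
  from tendsto_cong[OF this] lim show ?thesis
    unfolding at_quarter_within_quarter_dom by simp
qed

end
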